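(* There exist absolute constants $c, C > 0$, an infinite set $S$ of positive integers, and for each $n \in S$ a union-closed family $\mathcal{F}_n \subset \mathcal{P}([n])$ with $\mathcal{F}_n \neq \emptyset$, $\mathcal{F}_n \neq \{\emptyset\}$ and $|\mathcal{F}_n| \to \infty$ as $n \to \infty$ in $S$, such that for every $n \in S$, $$c\,\frac{\log_2 \log_2 |\mathcal{F}_n|}{\log_2 |\mathcal{F}_n|} \;\leq\; \mathrm{AOD}(\mathcal{F}_n) \;\leq\; C\,\frac{\log_2 \log_2 |\mathcal{F}_n|}{\log_2 |\mathcal{F}_n|}.$$
   Context: $[n] = \{1,2,\ldots,n\}$. A family $\mathcal{F}$ of subsets of a set $X$ is union-closed if $A \cup B \in \mathcal{F}$ whenever $A, B \in \mathcal{F}$. For a finite nonempty family $\mathcal{F} \subset \mathcal{P}(X)$ and $x \in X$, the abundance of $x$ is $\gamma_x = |\{A \in \mathcal{F} : x \in A\}|/|\mathcal{F}|$. For $\mathcal{F} \neq \emptyset, \{\emptyset\}$, the average overlap density is $$\mathrm{AOD}(\mathcal{F}) = \frac{1}{|\mathcal{F}\setminus\{\emptyset\}|}\sum_{A \in \mathcal{F}\setminus\{\emptyset\}} \frac{1}{|A|}\sum_{x \in A} \gamma_x = \mathbb{E}_{A \in \mathcal{F}\setminus\{\emptyset\}}\,\mathbb{E}_{B \in \mathcal{F}}\left[\frac{|A\cap B|}{|A|}\right],$$ with $A$ and $B$ uniform. *)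

theory Defs
  imports "HOL-Analysis.Analysis"
begin

definition union_closed :: "'a set set \<Rightarrow> bool" where
  "union_closed F \<longleftrightarrow> (\<forall>A\<in>F. \<forall>B\<in>F. A \<union> B \<in> F)"

definition abundance :: "'a set set \<Rightarrow> 'a \<Rightarrow> real" where
  "abundance F x = real (card {A\<in>F. x \<in> A}) / real (card F)"

definition AOD :: "'a set set \<Rightarrow> real" where
  "AOD F = (1 / real (card (F - {{}}))) *
     (\<Sum>A\<in>F - {{}}. (1 / real (card A)) * (\<Sum>x\<in>A. abundance F x))"

end

theory Submission
  imports Defs
begin

text \<open>Split [k B] into k blocks of length B = k^(2k) - 1. A member of the family is given by a
  height vector h in {0..k}^k and contains the initial segment of length k^(2 h i) - 1 of block i.
  Unions correspond to pointwise maxima of heights, so the family is union-closed, and it has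
  N = (k + 1)^k members. A point of block i above level j - 1 lies exactly in the members with
  h i >= j, a fraction (k + 1 - j)/(k + 1). Since consecutive segment lengths grow by the factor
  k^2, all but a fraction 1/k of a member lies at its maximal height M, so its overlap density
  is (k + 1 - M)/(k + 1) + O(1/k), and at least 1/(k + 1). Averaging over h, whose maximum is
  close to k for most h, gives AOD = Theta(1/k), while log log N / log N = Theta(1/k).\<close>

definition overlap_density :: "'a set set \<Rightarrow> 'a set \<Rightarrow> real" where
  "overlap_density F A = (1 / real (card A)) * (\<Sum>x\<in>A. abundance F x)"

lemma AOD_eq_average_overlap_density:
  "AOD F = (1 / real (card (F - {{}}))) * (\<Sum>A\<in>F - {{}}. overlap_density F A)"
  unfolding AOD_def overlap_density_def ..

lemma average_ge:
  fixes g :: "'a \<Rightarrow> real"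
  assumes "finite X" "X \<noteq> {}" "\<And>x. x \<in> X \<Longrightarrow> c \<le> g x"
  shows "c \<le> (1 / real (card X)) * (\<Sum>x\<in>X. g x)"
proof -
  have "real (card X) * c \<le> (\<Sum>x\<in>X. g x)"
    using sum_mono[of X "\<lambda>_. c" g] assms(3) by simp
  moreover have "real (card X) > 0" using assms(1,2) by (simp add: card_gt_0_iff)
  ultimately show ?thesis by (simp add: field_simps)
qed

lemma abundance_le_one:
  assumes "finite F"
  shows "abundance F x \<le> 1"
proof -
  have "card {A\<in>F. x \<in> A} \<le> card F" using assms by (intro card_mono) auto
  then show ?thesis unfolding abundance_def by (auto simp: divide_le_eq_1)
qed

lemma divide_le_divide_of_mult_le:
  fixes a b c d :: real
  assumes "0 < b" "0 < d" "a * d \<le> c * b"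
  shows "a / b \<le> c / d"
  using assms by (simp add: field_simps)

lemma abundance_image:
  assumes "inj_on \<Phi> D"
  shows "abundance (\<Phi> ` D) x = real (card {f\<in>D. x \<in> \<Phi> f}) / real (card D)"
proof -
  have "{A \<in> \<Phi> ` D. x \<in> A} = \<Phi> ` {f\<in>D. x \<in> \<Phi> f}" by auto
  moreover have "inj_on \<Phi> {f\<in>D. x \<in> \<Phi> f}" using assms by (rule inj_on_subset) auto
  ultimately show ?thesis unfolding abundance_def by (simp add: card_image assms)
qed

lemma AOD_image:
  assumes "inj_on \<Phi> D"
  shows "AOD (\<Phi> ` D) = (1 / real (card {f\<in>D. \<Phi> f \<noteq> {}})) *
           (\<Sum>f\<in>{f\<in>D. \<Phi> f \<noteq> {}}. overlap_density (\<Phi> ` D) (\<Phi> f))"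
proof -
  have "\<Phi> ` D - {{}} = \<Phi> ` {f\<in>D. \<Phi> f \<noteq> {}}" by auto
  moreover have inj: "inj_on \<Phi> {f\<in>D. \<Phi> f \<noteq> {}}" using assms by (rule inj_on_subset) auto
  ultimately show ?thesis
    unfolding AOD_eq_average_overlap_density by (simp add: card_image sum.reindex)
qed

lemma overlap_density_le:
  assumes F: "finite F" and A: "finite A" "A \<noteq> {}" and \<alpha>: "0 \<le> \<alpha>"
    and outside: "\<And>x. x \<in> A - R \<Longrightarrow> abundance F x \<le> \<alpha>"
  shows "overlap_density F A \<le> \<alpha> + real (card (A \<inter> R)) / real (card A)"
proof -
  have "(\<Sum>x\<in>A - R. abundance F x) \<le> real (card (A - R)) * \<alpha>"
    using sum_mono[of "A - R" "abundance F" "\<lambda>_. \<alpha>"] outside by simp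
  also have "\<dots> \<le> real (card A) * \<alpha>"
    using A \<alpha> by (intro mult_right_mono) (simp_all add: card_mono)
  finally have outer: "(\<Sum>x\<in>A - R. abundance F x) \<le> real (card A) * \<alpha>" .
  have inner: "(\<Sum>x\<in>A \<inter> R. abundance F x) \<le> real (card (A \<inter> R))"
    using sum_mono[of "A \<inter> R" "abundance F" "\<lambda>_. 1"] abundance_le_one[OF F] by simp
  have "(\<Sum>x\<in>A. abundance F x) \<le> real (card A) * \<alpha> + real (card (A \<inter> R))"
    using outer inner sum.Int_Diff[OF A(1), of "abundance F" R] by linarith
  moreover have "real (card A) > 0" using A by (simp add: card_gt_0_iff)
  ultimately show ?thesis unfolding overlap_density_def by (simp add: field_simps)
qed

lemma power_add_le_Suc_power:
  fixes n k :: nat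
  shows "n ^ (k + 1) + (k + 1) * n ^ k \<le> (n + 1) ^ (k + 1)"
proof (induction k)
  case 0
  then show ?case by simp
next
  case (Suc k)
  have "n ^ (Suc k + 1) + (Suc k + 1) * n ^ Suc k
        \<le> (n + 1) * (n ^ (k + 1) + (k + 1) * n ^ k)"
    by (simp add: algebra_simps)
  also have "\<dots> \<le> (n + 1) * (n + 1) ^ (k + 1)" using Suc.IH by (rule mult_le_mono2)
  finally show ?case by simp
qed

lemma sum_Suc_power_le:
  fixes n k :: nat
  shows "(k + 1) * (\<Sum>s<n. (s + 1) ^ k) \<le> n ^ (k + 1) + (k + 1) * n ^ k"
proof (induction n)
  case 0
  then show ?case by simp
next
  case (Suc n)
  have "(k + 1) * (\<Sum>s<Suc n. (s + 1) ^ k) = (k + 1) * (\<Sum>s<n. (s + 1) ^ k) + (k + 1) * (n + 1) ^ k"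
    by (simp add: algebra_simps)
  also have "\<dots> \<le> (n + 1) ^ (k + 1) + (k + 1) * (n + 1) ^ k"
    using Suc.IH power_add_le_Suc_power[of n k] by simp
  finally show ?case by simp
qed

lemma log_log_ratio_bounds:
  fixes k :: nat
  assumes k: "k \<ge> 2"
  defines "N \<equiv> real ((k + 1) ^ k)"
  shows "1 / (2 * real k) \<le> log 2 (log 2 N) / log 2 N"
    and "log 2 (log 2 N) / log 2 N \<le> 2 / real k"
proof -
  define l where "l = log 2 (real (k + 1))"
  have logN: "log 2 N = real k * l" unfolding N_def l_def by (simp add: log_nat_power)
  have l1: "1 \<le> l" unfolding l_def using k by simp
  have kpos: "0 < real k" using k by simp
  have loglogN: "log 2 (log 2 N) = log 2 (real k) + log 2 l"
    unfolding logN using kpos l1 by (simp add: log_mult_pos)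
  have "real (k + 1) \<le> real k * real k"
  proof -
    have "k + 1 \<le> k * k" using mult_le_mono1[OF k, of k] k by linarith
    then show ?thesis by (simp only: of_nat_mult[symmetric] of_nat_le_iff)
  qed
  then have "l \<le> log 2 (real k * real k)" unfolding l_def using k by simp
  then have l_le: "l \<le> 2 * log 2 (real k)" using kpos by (simp add: log_mult_pos)
  have "0 \<le> log 2 l" using l1 by simp
  then have "l / 2 \<le> log 2 (log 2 N)" using l_le loglogN by linarith
  then have "(l / 2) / (real k * l) \<le> log 2 (log 2 N) / (real k * l)"
    using kpos l1 by (intro divide_right_mono) simp_all
  then show "1 / (2 * real k) \<le> log 2 (log 2 N) / log 2 N" using l1 by (simp add: logN)
  have "l \<le> real (k + 1)"
    unfolding l_def using log2_of_power_le[of "k + 1" "k + 1"] less_exp[of "k + 1"] by simp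
  then have "log 2 l \<le> l" using l1 unfolding l_def by (subst log_le_cancel_iff) auto
  moreover have "log 2 (real k) \<le> l" unfolding l_def using k by simp
  ultimately have "log 2 (log 2 N) \<le> 2 * l" using loglogN by linarith
  then have "log 2 (log 2 N) / (real k * l) \<le> (2 * l) / (real k * l)"
    using kpos l1 by (intro divide_right_mono) simp_all
  then show "log 2 (log 2 N) / log 2 N \<le> 2 / real k" using l1 by (simp add: logN)
qed

definition stair :: "nat \<Rightarrow> nat \<Rightarrow> nat" where
  "stair k j = (k\<^sup>2) ^ j - 1"

definition block_len :: "nat \<Rightarrow> nat" where
  "block_len k = stair k k"

definition heights :: "nat \<Rightarrow> (nat \<Rightarrow> nat) set" where
  "heights k = {..<k} \<rightarrow>\<^sub>E {0..k}"

definition stair_set :: "nat \<Rightarrow> (nat \<Rightarrow> nat) \<Rightarrow> nat set" where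
  "stair_set k h = (\<Union>i<k. {i * block_len k + 1 .. i * block_len k + stair k (h i)})"

definition stair_family :: "nat \<Rightarrow> nat set set" where
  "stair_family k = stair_set k ` heights k"

lemma strict_mono_stair:
  assumes "k \<ge> 2"
  shows "strict_mono (stair k)"
proof (rule strict_monoI)
  fix a b :: nat assume "a < b"
  have "1 < k\<^sup>2" using assms less_1_mult[of k k] by (simp add: power2_eq_square)
  then have "(k\<^sup>2) ^ a < (k\<^sup>2) ^ b" using \<open>a < b\<close> by (intro power_strict_increasing)
  moreover have "1 \<le> (k\<^sup>2) ^ a" using assms by simp
  ultimately show "stair k a < stair k b" unfolding stair_def by linarith
qed

lemma stair_0 [simp]: "stair k 0 = 0"
  by (simp add: stair_def)

lemma stair_pos_iff:
  assumes "k \<ge> 2"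
  shows "0 < stair k j \<longleftrightarrow> 0 < j"
  using strict_mono_less[OF strict_mono_stair[OF assms], of 0 j] by simp

lemma stair_le_block_len:
  assumes "k \<ge> 2" "j \<le> k"
  shows "stair k j \<le> block_len k"
  unfolding block_len_def using strict_mono_less_eq[OF strict_mono_stair[OF assms(1)]] assms(2) by simp

lemma stair_Suc_ge:
  assumes "k \<ge> 1"
  shows "k\<^sup>2 * stair k j \<le> stair k (Suc j)"
proof -
  have "k\<^sup>2 * stair k j = k\<^sup>2 * (k\<^sup>2) ^ j - k\<^sup>2"
    unfolding stair_def by (simp only: diff_mult_distrib2 mult_1_right)
  also have "\<dots> \<le> k\<^sup>2 * (k\<^sup>2) ^ j - 1" using assms by (intro diff_le_mono2) simp
  also have "\<dots> = stair k (Suc j)" unfolding stair_def by simp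
  finally show ?thesis .
qed

lemma heights_le:
  "h \<in> heights k \<Longrightarrow> i < k \<Longrightarrow> h i \<le> k"
  unfolding heights_def using PiE_mem[of h "{..<k}" "\<lambda>_. {0..k}" i] by simp

lemma finite_heights: "finite (heights k)"
  unfolding heights_def by (simp add: finite_PiE)

lemma card_heights: "card (heights k) = (k + 1) ^ k"
  unfolding heights_def by (simp add: card_PiE)

lemma heights_filter_eq_PiE:
  assumes "\<And>j. j < k \<Longrightarrow> B j \<subseteq> {0..k}"
  shows "{h\<in>heights k. \<forall>j<k. h j \<in> B j} = Pi\<^sub>E {..<k} B"
proof (intro set_eqI iffI)
  fix h assume h: "h \<in> {h\<in>heights k. \<forall>j<k. h j \<in> B j}"
  show "h \<in> Pi\<^sub>E {..<k} B"
  proof (rule PiE_I)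
    fix j assume "j \<in> {..<k}"
    then show "h j \<in> B j" using h by simp
  next
    fix j assume "j \<notin> {..<k}"
    moreover have "h \<in> heights k" using h by simp
    ultimately show "h j = undefined" unfolding heights_def by (rule PiE_arb[rotated])
  qed
next
  fix h assume h: "h \<in> Pi\<^sub>E {..<k} B"
  have "Pi\<^sub>E {..<k} B \<subseteq> heights k" unfolding heights_def by (rule PiE_mono) (use assms in auto)
  then have "h \<in> heights k" using h by (rule subsetD)
  moreover have "\<forall>j<k. h j \<in> B j" using PiE_mem[OF h] by simp
  ultimately show "h \<in> {h\<in>heights k. \<forall>j<k. h j \<in> B j}" by simp
qed

lemma card_heights_ge:
  assumes "i < k" "M \<le> k"
  shows "card {h\<in>heights k. M \<le> h i} * (k + 1) = (k + 1 - M) * (k + 1) ^ k"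
proof -
  let ?B = "\<lambda>j. if j = i then {M..k} else {0..k}"
  have "{h\<in>heights k. M \<le> h i} = {h\<in>heights k. \<forall>j<k. h j \<in> ?B j}"
  proof (rule Collect_cong)
    fix h
    show "(h \<in> heights k \<and> M \<le> h i) \<longleftrightarrow> (h \<in> heights k \<and> (\<forall>j<k. h j \<in> ?B j))"
    proof (cases "h \<in> heights k")
      case True
      have "M \<le> h i \<longleftrightarrow> (\<forall>j<k. h j \<in> ?B j)"
      proof
        assume "M \<le> h i"
        then show "\<forall>j<k. h j \<in> ?B j" using heights_le[OF True] by simp
      next
        assume "\<forall>j<k. h j \<in> ?B j"
        then have "h i \<in> ?B i" using assms(1) by blast
        then show "M \<le> h i" by simp
      qed
      then show ?thesis using True by simp
    qed simp
  qed
  also have "\<dots> = Pi\<^sub>E {..<k} ?B" by (rule heights_filter_eq_PiE) simp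
  finally have "card {h\<in>heights k. M \<le> h i} = (\<Prod>j<k. card (?B j))"
    by (simp add: card_PiE)
  also have "\<dots> = card {M..k} * (\<Prod>j\<in>{..<k} - {i}. card (?B j))"
    using assms by (subst prod.remove[of _ i]) auto
  also have "(\<Prod>j\<in>{..<k} - {i}. card (?B j)) = (\<Prod>j\<in>{..<k} - {i}. k + 1)"
    by (intro prod.cong) auto
  also have "\<dots> = (k + 1) ^ (k - 1)" using assms by simp
  finally have "card {h\<in>heights k. M \<le> h i} = (k + 1 - M) * (k + 1) ^ (k - 1)" by simp
  moreover have "(k + 1) ^ (k - 1) * (k + 1) = (k + 1) ^ k" using assms by (cases k) simp_all
  ultimately show ?thesis by (metis mult.assoc)
qed

lemma card_heights_bounded:
  assumes "s \<le> k"
  shows "card {h\<in>heights k. \<forall>i<k. h i \<le> s} = (s + 1) ^ k"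
proof -
  have "{h\<in>heights k. \<forall>i<k. h i \<le> s} = {h\<in>heights k. \<forall>i<k. h i \<in> {0..s}}" by simp
  also have "\<dots> = {..<k} \<rightarrow>\<^sub>E {0..s}" using assms by (intro heights_filter_eq_PiE) simp
  finally show ?thesis by (simp add: card_PiE)
qed

lemma stair_set_memI:
  assumes "i < k" "1 \<le> q" "q \<le> stair k (h i)"
  shows "i * block_len k + q \<in> stair_set k h"
  unfolding stair_set_def using assms by force

lemma stair_set_memE:
  assumes "x \<in> stair_set k h"
  obtains i q where "i < k" "x = i * block_len k + q" "1 \<le> q" "q \<le> stair k (h i)"
proof -
  from assms obtain i where "i < k" "i * block_len k + 1 \<le> x" "x \<le> i * block_len k + stair k (h i)"
    unfolding stair_set_def by auto
  then show ?thesis using that[of i "x - i * block_len k"] by auto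
qed

lemma block_index_unique:
  fixes i j r r' B :: nat
  assumes "i * B + r = j * B + r'" "r < B" "r' < B"
  shows "i = j"
proof -
  have "i = (r + i * B) div B" using assms(2) by simp
  also have "r + i * B = r' + j * B" using assms(1) by simp
  also have "(r' + j * B) div B = j" using assms(3) by simp
  finally show ?thesis .
qed

lemma stair_set_block_mem_iff:
  assumes k: "k \<ge> 2" and h: "h \<in> heights k" and i: "i < k"
    and q: "1 \<le> q" "q \<le> block_len k"
  shows "i * block_len k + q \<in> stair_set k h \<longleftrightarrow> q \<le> stair k (h i)"
proof
  assume "i * block_len k + q \<in> stair_set k h"
  then obtain j q' where j: "j < k" "i * block_len k + q = j * block_len k + q'"
      "1 \<le> q'" "q' \<le> stair k (h j)"
    by (rule stair_set_memE)
  have "q' \<le> block_len k" using j(4) stair_le_block_len[OF k heights_le[OF h j(1)]] by simp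
  moreover have "j * block_len k + (q' - 1) = i * block_len k + (q - 1)" using j(2,3) q(1) by simp
  ultimately have "j = i" using block_index_unique q j(3) by (metis diff_less less_le_trans zero_less_one)
  then show "q \<le> stair k (h i)" using j by simp
next
  assume "q \<le> stair k (h i)"
  then show "i * block_len k + q \<in> stair_set k h" using i q(1) by (intro stair_set_memI)
qed

lemma stair_set_subset:
  assumes k: "k \<ge> 2" and h: "h \<in> heights k"
  shows "stair_set k h \<subseteq> {1..k * block_len k}"
proof
  fix x assume "x \<in> stair_set k h"
  then obtain i q where iq: "i < k" "x = i * block_len k + q" "1 \<le> q" "q \<le> stair k (h i)"
    by (rule stair_set_memE)
  have "q \<le> block_len k" using iq(4) stair_le_block_len[OF k heights_le[OF h iq(1)]] by simp
  moreover have "(i + 1) * block_len k \<le> k * block_len k" using iq(1) by (intro mult_le_mono1) simp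
  ultimately show "x \<in> {1..k * block_len k}" using iq by simp
qed

lemma stair_set_subsetD:
  assumes k: "k \<ge> 2" and f: "f \<in> heights k" and g: "g \<in> heights k"
    and sub: "stair_set k f \<subseteq> stair_set k g" and i: "i < k"
  shows "f i \<le> g i"
proof (cases "f i = 0")
  case False
  let ?q = "stair k (f i)"
  have "1 \<le> ?q" using False stair_pos_iff[OF k] by (simp add: Suc_le_eq)
  moreover have "?q \<le> block_len k" using stair_le_block_len[OF k heights_le[OF f i]] .
  ultimately have "i * block_len k + ?q \<in> stair_set k g"
    using sub stair_set_block_mem_iff[OF k f i] by auto
  then have "?q \<le> stair k (g i)"
    using stair_set_block_mem_iff[OF k g i] \<open>1 \<le> ?q\<close> \<open>?q \<le> block_len k\<close> by simp
  then show ?thesis using strict_mono_less_eq[OF strict_mono_stair[OF k]] by simp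
qed simp

lemma inj_on_stair_set:
  assumes k: "k \<ge> 2"
  shows "inj_on (stair_set k) (heights k)"
proof (rule inj_onI)
  fix f g assume f: "f \<in> heights k" and g: "g \<in> heights k" and eq: "stair_set k f = stair_set k g"
  show "f = g" using f g unfolding heights_def
  proof (rule PiE_ext)
    fix i assume "i \<in> {..<k}"
    then show "f i = g i"
      using stair_set_subsetD[OF k f g, of i] stair_set_subsetD[OF k g f, of i] eq by simp
  qed
qed

lemma max_heights_mem:
  assumes "f \<in> heights k" "g \<in> heights k"
  shows "(\<lambda>i\<in>{..<k}. max (f i) (g i)) \<in> heights k"
  unfolding heights_def restrict_PiE_iff using heights_le[OF assms(1)] heights_le[OF assms(2)] by simp

lemma stair_set_Un:
  assumes k: "k \<ge> 2"
  shows "stair_set k f \<union> stair_set k g = stair_set k (\<lambda>i\<in>{..<k}. max (f i) (g i))"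
proof -
  have "stair k (max a b) = max (stair k a) (stair k b)" for a b
    using strict_mono_less_eq[OF strict_mono_stair[OF k]] by (simp add: max_def)
  then show ?thesis unfolding stair_set_def by (auto simp: max_def split: if_splits)
qed

lemma stair_set_eq_empty_iff:
  assumes k: "k \<ge> 2" and h: "h \<in> heights k"
  shows "stair_set k h = {} \<longleftrightarrow> h = (\<lambda>i\<in>{..<k}. 0)"
proof
  assume empty: "stair_set k h = {}"
  have zero: "(\<lambda>i\<in>{..<k}. 0) \<in> heights k" unfolding heights_def by simp
  show "h = (\<lambda>i\<in>{..<k}. 0)"
  proof (rule inj_onD[OF inj_on_stair_set[OF k] _ h zero])
    show "stair_set k h = stair_set k (\<lambda>i\<in>{..<k}. 0)" using empty by (simp add: stair_set_def)
  qed
qed (simp add: stair_set_def)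

lemma card_stair_family:
  assumes "k \<ge> 2"
  shows "card (stair_family k) = (k + 1) ^ k"
  unfolding stair_family_def card_image[OF inj_on_stair_set[OF assms]] card_heights ..

lemma card_stair_family_gt:
  assumes "k \<ge> 2"
  shows "k < card (stair_family k)"
proof -
  have "k < 2 ^ k" by (rule less_exp)
  also have "\<dots> \<le> (k + 1) ^ k" using assms by (intro power_mono) simp_all
  finally show ?thesis unfolding card_stair_family[OF assms] .
qed

lemma stair_family_subset_Pow:
  assumes "k \<ge> 2"
  shows "stair_family k \<subseteq> Pow {1..k * block_len k}"
  unfolding stair_family_def using stair_set_subset[OF assms] by (simp add: image_subset_iff)

lemma stair_family_nontrivial:
  assumes "k \<ge> 2"
  shows "stair_family k \<noteq> {}" and "stair_family k \<noteq> {{}}"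
proof -
  have "2 \<le> card (stair_family k)" using card_stair_family_gt[OF assms] assms by simp
  then show "stair_family k \<noteq> {}" and "stair_family k \<noteq> {{}}" by (intro notI, simp)+
qed

lemma union_closed_stair_family:
  assumes k: "k \<ge> 2"
  shows "union_closed (stair_family k)"
  unfolding union_closed_def stair_family_def
  using stair_set_Un[OF k] max_heights_mem by (auto simp: image_iff)

lemma finite_stair_set: "finite (stair_set k h)"
  unfolding stair_set_def by simp

lemma card_stair_set_le: "card (stair_set k h) \<le> (\<Sum>i<k. stair k (h i))"
  unfolding stair_set_def by (rule order.trans[OF card_UN_le]) simp_all

lemma abundance_stair_family:
  assumes "k \<ge> 2"
  shows "abundance (stair_family k) x = real (card {h\<in>heights k. x \<in> stair_set k h}) / real ((k + 1) ^ k)"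
  unfolding stair_family_def abundance_image[OF inj_on_stair_set[OF assms]] card_heights ..

text \<open>A point of block i lies in every member of height k at i, and these form a fraction
  1/(k + 1) of the family.\<close>
lemma abundance_stair_family_ge:
  assumes k: "k \<ge> 2" and h: "h \<in> heights k" and x: "x \<in> stair_set k h"
  shows "1 / real (k + 1) \<le> abundance (stair_family k) x"
proof -
  obtain i q where iq: "i < k" "x = i * block_len k + q" "1 \<le> q" "q \<le> stair k (h i)"
    using x by (rule stair_set_memE)
  have q: "q \<le> block_len k" using iq(4) stair_le_block_len[OF k heights_le[OF h iq(1)]] by simp
  have "{g\<in>heights k. k \<le> g i} \<subseteq> {g\<in>heights k. x \<in> stair_set k g}"
  proof safe
    fix g assume g: "g \<in> heights k" "k \<le> g i"
    then have "g i = k" using heights_le[OF g(1) iq(1)] by simp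
    then show "x \<in> stair_set k g"
      using stair_set_block_mem_iff[OF k g(1) iq(1) iq(3) q] q iq(2) by (simp add: block_len_def)
  qed
  then have "card {g\<in>heights k. k \<le> g i} \<le> card {g\<in>heights k. x \<in> stair_set k g}"
    by (rule card_mono[rotated]) (simp add: finite_heights)
  then have "card {g\<in>heights k. k \<le> g i} * (k + 1) \<le> card {g\<in>heights k. x \<in> stair_set k g} * (k + 1)"
    by (rule mult_le_mono1)
  then have "1 * (k + 1) ^ k \<le> card {g\<in>heights k. x \<in> stair_set k g} * (k + 1)"
    unfolding card_heights_ge[OF iq(1) order.refl] by simp
  then have "1 * real ((k + 1) ^ k) \<le> real (card {g\<in>heights k. x \<in> stair_set k g}) * real (k + 1)"
    by (simp only: of_nat_mult[symmetric] of_nat_le_iff of_nat_1)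
  then show ?thesis unfolding abundance_stair_family[OF k] by (intro divide_le_divide_of_mult_le) simp_all
qed

text \<open>A point of block i above level M - 1 only lies in the members of height at least M at i.\<close>
lemma abundance_stair_family_le:
  assumes k: "k \<ge> 2" and i: "i < k" and M: "M \<le> k"
    and q: "stair k (M - 1) < q" "q \<le> block_len k"
  shows "abundance (stair_family k) (i * block_len k + q) \<le> real (k + 1 - M) / real (k + 1)"
proof -
  let ?x = "i * block_len k + q"
  have "{g\<in>heights k. ?x \<in> stair_set k g} \<subseteq> {g\<in>heights k. M \<le> g i}"
  proof safe
    fix g assume g: "g \<in> heights k" "?x \<in> stair_set k g"
    then have "stair k (M - 1) < stair k (g i)"
      using stair_set_block_mem_iff[OF k g(1) i _ q(2)] q(1) by simp
    then show "M \<le> g i" using strict_mono_less[OF strict_mono_stair[OF k]] by simp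
  qed
  then have "card {g\<in>heights k. ?x \<in> stair_set k g} \<le> card {g\<in>heights k. M \<le> g i}"
    by (rule card_mono[rotated]) (simp add: finite_heights)
  then have "card {g\<in>heights k. ?x \<in> stair_set k g} * (k + 1) \<le> card {g\<in>heights k. M \<le> g i} * (k + 1)"
    by (rule mult_le_mono1)
  also have "\<dots> = (k + 1 - M) * (k + 1) ^ k" by (rule card_heights_ge[OF i M])
  finally have "card {g\<in>heights k. ?x \<in> stair_set k g} * (k + 1) \<le> (k + 1 - M) * (k + 1) ^ k" .
  then have "real (card {g\<in>heights k. ?x \<in> stair_set k g}) * real (k + 1) \<le> real (k + 1 - M) * real ((k + 1) ^ k)"
    by (simp only: of_nat_mult[symmetric] of_nat_le_iff)
  then show ?thesis unfolding abundance_stair_family[OF k] by (intro divide_le_divide_of_mult_le) simp_all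
qed

definition max_height :: "nat \<Rightarrow> (nat \<Rightarrow> nat) \<Rightarrow> nat" where
  "max_height k h = Max (h ` {..<k})"

lemma max_height_ge: "i < k \<Longrightarrow> h i \<le> max_height k h"
  unfolding max_height_def by (rule Max_ge) simp_all

lemma max_height_le_iff: "0 < k \<Longrightarrow> max_height k h \<le> s \<longleftrightarrow> (\<forall>i<k. h i \<le> s)"
  unfolding max_height_def by (subst Max_le_iff) auto

lemma max_height_attained:
  assumes "0 < k"
  obtains i where "i < k" "h i = max_height k h"
proof -
  have "Max (h ` {..<k}) \<in> h ` {..<k}" using assms by (intro Max_in) auto
  then show ?thesis using that unfolding max_height_def by auto
qed

lemma overlap_density_stair_family_ge:
  assumes k: "k \<ge> 2" and h: "h \<in> heights k" and ne: "stair_set k h \<noteq> {}"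
  shows "1 / real (k + 1) \<le> overlap_density (stair_family k) (stair_set k h)"
  unfolding overlap_density_def
  using finite_stair_set ne abundance_stair_family_ge[OF k h] by (rule average_ge)

lemma max_height_pos:
  assumes k: "k \<ge> 2" and ne: "stair_set k h \<noteq> {}"
  shows "0 < max_height k h"
proof -
  obtain x where "x \<in> stair_set k h" using ne by blast
  then obtain i q where "i < k" "1 \<le> q" "q \<le> stair k (h i)" by (rule stair_set_memE)
  then have "0 < h i" using stair_pos_iff[OF k, of "h i"] by simp
  then show ?thesis using max_height_ge[OF \<open>i < k\<close>, of h] by simp
qed

text \<open>The k blocks below level M - 1 are dominated by one segment of height M, which is
  k^2 times longer.\<close>
lemma card_stair_set_below_top_le:
  assumes k: "k \<ge> 2" and M: "0 < max_height k h"
  shows "card (stair_set k h \<inter> stair_set k (\<lambda>_. max_height k h - 1)) * k \<le> card (stair_set k h)"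
proof -
  let ?M = "max_height k h"
  obtain i where i: "i < k" "h i = ?M"
    using max_height_attained[of k h] k by (metis less_le_trans pos2)
  have "card (stair_set k h \<inter> stair_set k (\<lambda>_. ?M - 1)) \<le> card (stair_set k (\<lambda>_. ?M - 1))"
    by (intro card_mono finite_stair_set) simp
  also have "\<dots> \<le> k * stair k (?M - 1)" using card_stair_set_le[of k "\<lambda>_. ?M - 1"] by simp
  finally have "card (stair_set k h \<inter> stair_set k (\<lambda>_. ?M - 1)) * k \<le> k\<^sup>2 * stair k (?M - 1)"
    by (simp add: power2_eq_square)
  also have "\<dots> \<le> stair k ?M" using stair_Suc_ge[of k "?M - 1"] k M by simp
  also have "\<dots> = card {i * block_len k + 1 .. i * block_len k + stair k (h i)}" using i by simp
  also have "\<dots> \<le> card (stair_set k h)"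
    using i(1) by (intro card_mono finite_stair_set) (auto simp: stair_set_def)
  finally show ?thesis .
qed

text \<open>Points above level M - 1, where M is the maximal height, have abundance at most
  (k + 1 - M)/(k + 1), and they make up all but a fraction 1/k of the member.\<close>
lemma overlap_density_stair_family_le:
  assumes k: "k \<ge> 2" and h: "h \<in> heights k" and ne: "stair_set k h \<noteq> {}"
  shows "overlap_density (stair_family k) (stair_set k h)
           \<le> real (k + 1 - max_height k h) / real (k + 1) + 1 / real k"
proof -
  define M where "M = max_height k h"
  define A where "A = stair_set k h"
  define R where "R = stair_set k (\<lambda>_. M - 1)"
  have M: "M \<le> k" using heights_le[OF h] max_height_le_iff[of k h k] k by (simp add: M_def)
  have outside: "abundance (stair_family k) x \<le> real (k + 1 - M) / real (k + 1)" if x: "x \<in> A - R" for x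
  proof -
    from x have "x \<in> stair_set k h" by (simp add: A_def)
    then obtain i q where iq: "i < k" "x = i * block_len k + q" "1 \<le> q" "q \<le> stair k (h i)"
      by (rule stair_set_memE)
    have "stair k (M - 1) < q"
    proof (rule ccontr)
      assume "\<not> stair k (M - 1) < q"
      then have "x \<in> R" unfolding R_def iq(2) using iq(1,3) by (intro stair_set_memI) simp_all
      with x show False by simp
    qed
    moreover have "q \<le> block_len k" using iq(4) stair_le_block_len[OF k heights_le[OF h iq(1)]] by simp
    ultimately show ?thesis unfolding iq(2) by (rule abundance_stair_family_le[OF k iq(1) M])
  qed
  have "real (card (A \<inter> R)) * real k \<le> real (card A)"
    using card_stair_set_below_top_le[OF k max_height_pos[OF k ne]] unfolding A_def R_def M_def
    by (simp only: of_nat_mult[symmetric] of_nat_le_iff)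
  moreover have "0 < card A" using ne finite_stair_set[of k h] by (simp add: A_def card_gt_0_iff)
  ultimately have "real (card (A \<inter> R)) / real (card A) \<le> 1 / real k"
    using k by (simp add: divide_simps)
  moreover have "overlap_density (stair_family k) A
      \<le> real (k + 1 - M) / real (k + 1) + real (card (A \<inter> R)) / real (card A)"
  proof (rule overlap_density_le)
    show "finite (stair_family k)" by (simp add: stair_family_def finite_heights)
  qed (use ne outside in \<open>simp_all add: A_def finite_stair_set\<close>)
  ultimately show ?thesis unfolding A_def M_def by simp
qed

lemma sum_heights_gap:
  assumes "0 < k"
  shows "(\<Sum>h\<in>heights k. k + 1 - max_height k h) = (\<Sum>s<k + 1. (s + 1) ^ k)"
proof -
  have "(\<Sum>h\<in>heights k. k + 1 - max_height k h)
          = (\<Sum>h\<in>heights k. \<Sum>s<k + 1. if max_height k h \<le> s then 1 else 0)"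
  proof (rule sum.cong[OF refl])
    fix h assume "h \<in> heights k"
    then have "max_height k h \<le> k" using max_height_le_iff[OF assms] heights_le by blast
    moreover have "{s\<in>{..<k + 1}. max_height k h \<le> s} = {max_height k h..k}" by auto
    ultimately have "k + 1 - max_height k h = card {s\<in>{..<k + 1}. max_height k h \<le> s}" by simp
    also have "\<dots> = (\<Sum>s<k + 1. if max_height k h \<le> s then 1 else 0)"
      by (simp only: card_eq_sum sum.inter_filter[OF finite_lessThan])
    finally show "k + 1 - max_height k h = (\<Sum>s<k + 1. if max_height k h \<le> s then 1 else 0)" .
  qed
  also have "\<dots> = (\<Sum>s<k + 1. card {h\<in>heights k. max_height k h \<le> s})"
    by (subst sum.swap) (simp only: card_eq_sum sum.inter_filter[OF finite_heights])
  also have "\<dots> = (\<Sum>s<k + 1. (s + 1) ^ k)"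
    using card_heights_bounded max_height_le_iff[OF assms] by (intro sum.cong) simp_all
  finally show ?thesis .
qed

lemma sum_heights_gap_le:
  assumes "0 < k"
  shows "(\<Sum>h\<in>heights k. k + 1 - max_height k h) \<le> 2 * (k + 1) ^ k"
proof -
  have "(k + 1) * (\<Sum>s<k + 1. (s + 1) ^ k) \<le> (k + 1) * (2 * (k + 1) ^ k)"
    using sum_Suc_power_le[of k "k + 1"] by simp
  then show ?thesis unfolding sum_heights_gap[OF assms] by (subst (asm) mult_le_cancel1) simp
qed

lemma AOD_stair_family_ge:
  assumes k: "k \<ge> 2"
  shows "1 / real (k + 1) \<le> AOD (stair_family k)"
  unfolding AOD_eq_average_overlap_density
proof (rule average_ge)
  show "finite (stair_family k - {{}})" by (simp add: stair_family_def finite_heights)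
  show "stair_family k - {{}} \<noteq> {}"
    using stair_family_nontrivial[OF k] by (simp add: Diff_eq_empty_iff subset_singleton_iff)
  show "1 / real (k + 1) \<le> overlap_density (stair_family k) A" if "A \<in> stair_family k - {{}}" for A
    using that overlap_density_stair_family_ge[OF k] unfolding stair_family_def by auto
qed

lemma sum_overlap_density_stair_family_le:
  assumes k: "k \<ge> 2"
  defines "D \<equiv> {h\<in>heights k. stair_set k h \<noteq> {}}"
  shows "(\<Sum>h\<in>D. overlap_density (stair_family k) (stair_set k h))
           \<le> 2 * real ((k + 1) ^ k) / real (k + 1) + real (card D) / real k"
proof -
  have "(\<Sum>h\<in>D. overlap_density (stair_family k) (stair_set k h))
          \<le> (\<Sum>h\<in>D. real (k + 1 - max_height k h) / real (k + 1) + 1 / real k)"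
    using overlap_density_stair_family_le[OF k] by (intro sum_mono) (simp add: D_def)
  also have "\<dots> = (\<Sum>h\<in>D. real (k + 1 - max_height k h)) / real (k + 1) + real (card D) / real k"
    by (simp add: sum.distrib sum_divide_distrib)
  also have "(\<Sum>h\<in>D. real (k + 1 - max_height k h)) \<le> (\<Sum>h\<in>heights k. real (k + 1 - max_height k h))"
    by (intro sum_mono2) (auto simp: D_def finite_heights)
  also have "\<dots> \<le> 2 * real ((k + 1) ^ k)"
  proof -
    have "real (\<Sum>h\<in>heights k. k + 1 - max_height k h) \<le> real (2 * (k + 1) ^ k)"
      using sum_heights_gap_le[of k] k by (simp only: of_nat_le_iff)
    then show ?thesis by simp
  qed
  finally show ?thesis by (simp add: divide_right_mono)
qed

lemma AOD_stair_family_le: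
  assumes k: "k \<ge> 2"
  shows "AOD (stair_family k) \<le> 5 / real k"
proof -
  define N where "N = real ((k + 1) ^ k)"
  define D where "D = {h\<in>heights k. stair_set k h \<noteq> {}}"
  have "D = heights k - {\<lambda>i\<in>{..<k}. 0}" using stair_set_eq_empty_iff[OF k] by (auto simp: D_def)
  moreover have "(\<lambda>i\<in>{..<k}. 0) \<in> heights k" unfolding heights_def by simp
  ultimately have card_D: "real (card D) = N - 1"
    by (simp add: N_def card_heights finite_heights of_nat_diff)
  have "3 * 3 \<le> (k + 1) * (k + 1)" using k by (intro mult_le_mono) simp_all
  also have "\<dots> \<le> (k + 1) ^ k" using power_increasing[of 2 k "k + 1"] k by (simp add: power2_eq_square)
  finally have "real 4 \<le> N" unfolding N_def by (simp only: of_nat_le_iff)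
  then have N: "4 \<le> N" by simp
  have "AOD (stair_family k) = (1 / real (card D)) * (\<Sum>h\<in>D. overlap_density (stair_family k) (stair_set k h))"
    unfolding stair_family_def D_def by (rule AOD_image[OF inj_on_stair_set[OF k]])
  also have "\<dots> \<le> (1 / (N - 1)) * (2 * N / real (k + 1) + (N - 1) / real k)"
    using sum_overlap_density_stair_family_le[OF k, folded D_def N_def] N unfolding card_D
    by (intro mult_left_mono) simp_all
  also have "\<dots> = (2 * N / (N - 1)) / real (k + 1) + 1 / real k"
    using N k by (simp add: distrib_left)
  also have "\<dots> \<le> 4 / real k + 1 / real k"
  proof -
    have "2 * N / (N - 1) \<le> 4" using N by (simp add: field_simps)
    then have "(2 * N / (N - 1)) / real (k + 1) \<le> 4 / real k"
      using k by (intro frac_le) simp_all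
    then show ?thesis by simp
  qed
  finally show ?thesis by simp
qed

lemma AOD_stair_family_bounds:
  assumes k: "k \<ge> 2"
  defines "N \<equiv> real (card (stair_family k))"
  shows "1 / 4 * (log 2 (log 2 N) / log 2 N) \<le> AOD (stair_family k)"
    and "AOD (stair_family k) \<le> 10 * (log 2 (log 2 N) / log 2 N)"
proof -
  note ratio = log_log_ratio_bounds[OF k, folded card_stair_family[OF k], folded N_def]
  have "1 / 4 * (log 2 (log 2 N) / log 2 N) \<le> 1 / 4 * (2 / real k)" using ratio(2) by simp
  also have "\<dots> \<le> 1 / real (k + 1)" using k by (simp add: field_simps)
  also have "\<dots> \<le> AOD (stair_family k)" by (rule AOD_stair_family_ge[OF k])
  finally show "1 / 4 * (log 2 (log 2 N) / log 2 N) \<le> AOD (stair_family k)" .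
  have "AOD (stair_family k) \<le> 5 / real k" by (rule AOD_stair_family_le[OF k])
  also have "\<dots> = 10 * (1 / (2 * real k))" by simp
  also have "\<dots> \<le> 10 * (log 2 (log 2 N) / log 2 N)" using ratio(1) by simp
  finally show "AOD (stair_family k) \<le> 10 * (log 2 (log 2 N) / log 2 N)" .
qed

lemma block_len_pos: "k \<ge> 2 \<Longrightarrow> 0 < block_len k"
  unfolding block_len_def using stair_pos_iff[of k k] by simp

lemma strict_mono_on_ground_size: "strict_mono_on {2..} (\<lambda>k. k * block_len k)"
proof (rule strict_mono_onI)
  fix a b :: nat assume a: "a \<in> {2..}" and b: "b \<in> {2..}" and "a < b"
  have "(a\<^sup>2) ^ a \<le> (b\<^sup>2) ^ a" using \<open>a < b\<close> by (intro power_mono) simp_all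
  also have "\<dots> \<le> (b\<^sup>2) ^ b" using \<open>a < b\<close> b by (intro power_increasing) simp_all
  finally have "block_len a \<le> block_len b" unfolding block_len_def stair_def by simp
  then have "a * block_len a \<le> a * block_len b" by simp
  also have "\<dots> < b * block_len b" using \<open>a < b\<close> block_len_pos[of b] b by simp
  finally show "a * block_len a < b * block_len b" .
qed

lemma stair_family_sequence:
  obtains S :: "nat set" and F :: "nat \<Rightarrow> nat set set"
  where "infinite S" and "\<And>n. n \<in> S \<Longrightarrow> \<exists>k\<ge>2. n = k * block_len k \<and> F n = stair_family k"
    and "\<And>M. finite {n\<in>S. card (F n) \<le> M}"
proof -
  let ?size = "\<lambda>k. k * block_len k"
  let ?F = "\<lambda>n. stair_family (the_inv_into {2..} ?size n)"
  have inj: "inj_on ?size {2..}" using strict_mono_on_ground_size by (rule strict_mono_on_imp_inj_on)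
  have "infinite (?size ` {2..})"
  proof
    assume "finite (?size ` {2..})"
    then have "finite {2::nat..}" by (rule finite_imageD[OF _ inj])
    then show False using infinite_Ici[of "2::nat"] by contradiction
  qed
  moreover have index: "\<exists>k\<ge>2. n = ?size k \<and> ?F n = stair_family k" if n: "n \<in> ?size ` {2..}" for n
  proof -
    obtain k where k: "k \<in> {2..}" "n = ?size k" using n by (rule imageE)
    then have "?F n = stair_family k" using the_inv_into_f_f[OF inj k(1)] by simp
    with k show ?thesis by auto
  qed
  moreover have "finite {n\<in>?size ` {2..}. card (?F n) \<le> M}" for M
  proof (rule finite_subset)
    show "{n\<in>?size ` {2..}. card (?F n) \<le> M} \<subseteq> ?size ` {..M}"
    proof
      fix n assume n: "n \<in> {n\<in>?size ` {2..}. card (?F n) \<le> M}"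
      then obtain k where k: "k \<ge> 2" "n = ?size k" "?F n = stair_family k" using index by blast
      then have "k \<le> M" using card_stair_family_gt[OF k(1)] n by simp
      then show "n \<in> ?size ` {..M}" using k(2) by simp
    qed
  qed simp
  ultimately show thesis by (rule that)
qed

theorem theorem2:
  shows "\<exists>(c::real) (C::real) (S::nat set) (F::nat \<Rightarrow> nat set set).
    c > 0 \<and> C > 0 \<and> infinite S \<and> (\<forall>n\<in>S. n > 0) \<and>
    (\<forall>n\<in>S. F n \<subseteq> Pow {1..n} \<and> union_closed (F n) \<and>
              F n \<noteq> {} \<and> F n \<noteq> {{}}) \<and>
    (\<forall>M::nat. finite {n\<in>S. card (F n) \<le> M}) \<and>
    (\<forall>n\<in>S.
       c * (log 2 (log 2 (real (card (F n)))) / log 2 (real (card (F n)))) \<le> AOD (F n) \<and>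
       AOD (F n) \<le> C * (log 2 (log 2 (real (card (F n)))) / log 2 (real (card (F n)))))"
proof -
  obtain S F where S: "infinite S"
    and SF: "\<And>n. n \<in> S \<Longrightarrow> \<exists>k\<ge>2. n = k * block_len k \<and> F n = stair_family k"
    and sublevel: "\<And>M. finite {n\<in>S. card (F n) \<le> M}"
    by (rule stair_family_sequence) (rule that)
  have "n > 0 \<and> F n \<subseteq> Pow {1..n} \<and> union_closed (F n) \<and> F n \<noteq> {} \<and> F n \<noteq> {{}} \<and>
      1 / 4 * (log 2 (log 2 (real (card (F n)))) / log 2 (real (card (F n)))) \<le> AOD (F n) \<and>
      AOD (F n) \<le> 10 * (log 2 (log 2 (real (card (F n)))) / log 2 (real (card (F n))))" if n: "n \<in> S" for n
  proof -
    obtain k where k: "k \<ge> 2" "n = k * block_len k" "F n = stair_family k" using SF[OF n] by blast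
    then show ?thesis
      using block_len_pos[OF k(1)] stair_family_subset_Pow[OF k(1)] union_closed_stair_family[OF k(1)]
        stair_family_nontrivial[OF k(1)] AOD_stair_family_bounds[OF k(1)] by simp
  qed
  with S sublevel show ?thesis by (intro exI[of _ "1 / 4"] exI[of _ 10] exI[of _ S] exI[of _ F]) simp
qed

end
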